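(* Let $A,B\in \mathbb{R}^{m\times n}$ with $m<n$ and $b\in \mathbb{R}^m$. If the equation $Ax-B|x|=b$ has a solution $x_*$ with sign pattern $s=\operatorname{sign}(x_* )\in\{-1,0,1\}^n$ such that $x_*$ has more than $\operatorname{rank}(A\operatorname{diag}(s) - B)$ nonzero entries, then $Ax-B|x|=b$ has infinitely many solutions with the sign pattern $s$.
   Context: $|x|$ is the entrywise absolute value; $\operatorname{diag}(s)$ is the diagonal matrix with diagonal $s$; $\operatorname{sign}$ is applied entrywise with $\operatorname{sign}(r)=1,0,-1$ for $r>0,r=0,r<0$. A vector $x$ has sign pattern $s$ if $\operatorname{sign}(x_{(i)})=s_{(i)}$ for all $i$. *)

theory Defs
  imports "HOL-Analysis.Analysis"
begin

definition vabs :: "real^'n \<Rightarrow> real^'n" where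
  "vabs x = (\<chi> i. \<bar>x $ i\<bar>)"

definition diag :: "real^'n \<Rightarrow> real^'n^'n" where
  "diag s = (\<chi> i j. if i = j then s $ i else 0)"

definition vsign :: "real^'n \<Rightarrow> real^'n" where
  "vsign x = (\<chi> i. sgn (x $ i))"

definition has_sign_pattern :: "real^'n \<Rightarrow> real^'n \<Rightarrow> bool" where
  "has_sign_pattern x s \<longleftrightarrow> (\<forall>i. sgn (x $ i) = s $ i)"

end

theory Submission
  imports Defs
begin

text \<open>On the orthant of a sign pattern \<open>s\<close> the map \<open>x \<mapsto> A x - B \<bar>x\<bar>\<close> is linear,
  namely \<open>x \<mapsto> (A diag s - B) diag s x\<close>. Its matrix has rank at most
  \<open>rank (A diag s - B)\<close>, so the rank hypothesis yields a nonzero vector \<open>z\<close> in its kernel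
  that vanishes outside the support of \<open>x\<^sub>*\<close>. Moving along \<open>x\<^sub>* + t z\<close> for small \<open>t\<close>
  keeps the sign pattern and hence the value of the map, which gives a whole segment of
  solutions.\<close>

lemma null_vector_supported_on:
  fixes M :: "real^'n^'m" and S :: "'n set"
  assumes "rank M < card S"
  shows "\<exists>z. z \<noteq> 0 \<and> M *v z = 0 \<and> (\<forall>i. i \<notin> S \<longrightarrow> z $ i = 0)"
proof (rule ccontr)
  assume no_null: "\<not> ?thesis"
  define T where "T = (\<lambda>i. axis i (1::real)) ` S"
  have "independent T"
    unfolding T_def by (rule independent_substdbasis) (auto simp: axis_in_Basis_iff)
  moreover have "card T = card S"
    unfolding T_def by (rule card_image) (auto simp: inj_on_def axis_eq_axis)
  ultimately have dim_T: "dim T = card S"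
    by (simp add: dim_eq_card_independent)
  have "subspace {z::real^'n. \<forall>i. i \<notin> S \<longrightarrow> z $ i = 0}"
    unfolding subspace_def by auto
  then have span_T: "span T \<subseteq> {z. \<forall>i. i \<notin> S \<longrightarrow> z $ i = 0}"
    by (rule span_minimal[rotated]) (auto simp: T_def axis_def)
  have "inj_on ((*v) M) (span T)"
  proof (rule inj_onI)
    fix u v assume "u \<in> span T" "v \<in> span T" "M *v u = M *v v"
    then have "u - v \<in> span T" and null: "M *v (u - v) = 0"
      by (simp_all add: span_diff matrix_vector_mult_diff_distrib)
    then have "\<forall>i. i \<notin> S \<longrightarrow> (u - v) $ i = 0"
      using span_T by auto
    then show "u = v" using null no_null by auto
  qed
  then have "card S = dim ((*v) M ` T)"
    using dim_T dim_image_eq[OF matrix_vector_mul_linear] by metis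
  also have "\<dots> \<le> rank M"
    unfolding rank_dim_range by (rule dim_subset) auto
  finally show False using assms by simp
qed

lemma diag_mult_vec: "diag s *v v = (\<chi> i. s $ i * v $ i)"
proof -
  have "(\<Sum>j\<in>UNIV. (if i = j then s $ i else 0) * v $ j) = s $ i * v $ i" for i
    by (simp add: if_distrib[of "\<lambda>c. c * _"] cong: if_cong)
  then show ?thesis by (simp add: matrix_vector_mult_def diag_def vec_eq_iff)
qed

lemma has_sign_pattern_vsign: "has_sign_pattern x (vsign x)"
  by (simp add: has_sign_pattern_def vsign_def)

text \<open>On the orthant of \<open>s\<close> we have \<open>\<bar>x\<bar> = diag s x\<close> and \<open>x = diag s (diag s x)\<close>.\<close>

lemma abs_equation_linear_on_sign_pattern:
  fixes A B :: "real^'n^'m"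
  assumes "has_sign_pattern x s"
  shows "A *v x - B *v vabs x = ((A ** diag s - B) ** diag s) *v x"
proof -
  have s: "s $ i = sgn (x $ i)" for i
    using assms by (simp add: has_sign_pattern_def)
  have "vabs x = diag s *v x"
    by (simp add: vabs_def diag_mult_vec s vec_eq_iff abs_sgn)
  moreover have "diag s *v (diag s *v x) = x"
    by (simp add: diag_mult_vec s vec_eq_iff sgn_if)
  ultimately show ?thesis
    by (simp add: matrix_vector_mult_diff_rdistrib matrix_vector_mul_assoc[symmetric])
qed

lemma eventually_has_sign_pattern_along:
  fixes x z :: "real^'n"
  assumes "\<And>i. x $ i = 0 \<Longrightarrow> z $ i = 0"
  shows "\<forall>\<^sub>F t in at 0. has_sign_pattern (x + t *\<^sub>R z) (vsign x)"
proof -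
  have "\<forall>\<^sub>F t in at 0. sgn (x $ i + t * z $ i) = sgn (x $ i)" for i
  proof (cases "x $ i = 0")
    case True
    then show ?thesis using assms by simp
  next
    case False
    have "((\<lambda>t. x $ i + t * z $ i) \<longlongrightarrow> x $ i + 0 * z $ i) (at 0)"
      by (intro tendsto_intros)
    then have "\<forall>\<^sub>F t in at 0. dist (x $ i + t * z $ i) (x $ i) < \<bar>x $ i\<bar>"
      using False by (simp add: tendsto_iff)
    then show ?thesis
      by (rule eventually_mono) (auto simp: dist_real_def sgn_if split: if_splits)
  qed
  then show ?thesis
    by (simp add: has_sign_pattern_def vsign_def eventually_all_finite)
qed

lemma infinite_eventually_at:
  assumes "\<forall>\<^sub>F t in at (a::real). P t"
  shows "infinite {t. P t}"
proof -
  obtain d where "d > 0" and P: "\<And>t. t \<noteq> a \<Longrightarrow> dist t a < d \<Longrightarrow> P t"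
    using assms by (auto simp: eventually_at)
  then have "{a<..<a + d} \<subseteq> {t. P t}"
    by (auto simp: dist_real_def)
  then show ?thesis
    using \<open>d > 0\<close> infinite_Ioo finite_subset by (metis less_add_same_cancel1)
qed

theorem theorem3p4:
  fixes A B :: "real^'n^'m" and b :: "real^'m" and xs s :: "real^'n"
  assumes "CARD('m) < CARD('n)"
    and "A *v xs - B *v vabs xs = b"
    and "s = vsign xs"
    and "card {i. xs $ i \<noteq> 0} > rank (A ** diag s - B)"
  shows "infinite {x. A *v x - B *v vabs x = b \<and> has_sign_pattern x s}"
proof -
  let ?sol = "{x. A *v x - B *v vabs x = b \<and> has_sign_pattern x s}"
  define L where "L = (A ** diag s - B) ** diag s"
  have "rank L < card {i. xs $ i \<noteq> 0}"
    using assms(4) rank_mul_le_left[of "A ** diag s - B" "diag s"] by (simp add: L_def)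
  then obtain z where "z \<noteq> 0" "L *v z = 0" and supp: "\<And>i. xs $ i = 0 \<Longrightarrow> z $ i = 0"
    using null_vector_supported_on by blast
  have "L *v xs = b"
    using abs_equation_linear_on_sign_pattern[OF has_sign_pattern_vsign, of A xs B] assms(2,3)
    by (simp add: L_def)
  then have "L *v (xs + t *\<^sub>R z) = b" for t
    using \<open>L *v z = 0\<close> by (simp add: matrix_vector_right_distrib matrix_vector_mult_scaleR)
  moreover have "\<forall>\<^sub>F t in at 0. has_sign_pattern (xs + t *\<^sub>R z) s"
    using eventually_has_sign_pattern_along[of xs z] supp assms(3) by simp
  ultimately have "\<forall>\<^sub>F t in at 0. xs + t *\<^sub>R z \<in> ?sol"
    by (auto elim!: eventually_mono simp: abs_equation_linear_on_sign_pattern L_def)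
  then have "infinite ((\<lambda>t. xs + t *\<^sub>R z) ` {t. xs + t *\<^sub>R z \<in> ?sol})"
    using infinite_eventually_at \<open>z \<noteq> 0\<close> by (simp add: finite_image_iff inj_on_def)
  then show ?thesis
    by (rule infinite_super[rotated]) auto
qed

end
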